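(* Let $n\ge4$ be even and $\alpha_n=\frac{\log(5n-6)}{\log n}$. There exists $C_n>1$ such that for every choice function $\eta$, every $x\in K^\eta$ and every $r\in(0,1/n)$, \[C_n^{-1}r^{\alpha_n}\le\mathcal{H}^{\alpha_n}(K^\eta\cap B(x,r))\le C_nr^{\alpha_n}.\]
   Context: Let $\mathcal{A}_n=\{1,\dots,5n-6\}$, $\mathcal{A}_n^m$ the words of length $m$ ($\mathcal{A}_n^0=\{\varepsilon\}$), $\mathcal{A}_n^*=\bigcup_{m\ge0}\mathcal{A}_n^m$. Define maps $\psi^1_{n,j},\psi^2_{n,j}:\mathbb{R}^2\to\mathbb{R}^2$, $j\in\mathcal{A}_n$, each of the form $x\mapsto\frac1nx+b$: for $j=1,\dots,4n-4$, $\psi^1_{n,j}=\psi^2_{n,j}$ map $[0,1]^2$ onto the $4n-4$ squares of the grid of $n^2$ closed squares of side $1/n$ in $[0,1]^2$ meeting $\partial[0,1]^2$ (fixed enumeration); for $j=4n-3+i$, $i=0,\dots,\frac n2-2$, $\psi^1_{n,j}(x)=\psi^2_{n,j}(x)=\frac1nx+(\frac12+\frac in,\frac1n)$; for $j=4n+\frac n2-4+i$, $i=0,\dots,\frac n2-2$, $\psi^1_{n,j}(x)=\frac1nx+(\frac{i+1}n,\frac2n)$, $\psi^2_{n,j}(x)=\frac1nx+(\frac{i+1}n,\frac1n)$. A choice function is any $\eta:\mathcal{A}_n^*\to\{1,2\}$. Set $\phi^\eta_\varepsilon=\mathrm{id}$ and $\phi^\eta_w=\psi^{\eta(\varepsilon)}_{n,i_1}\circ\psi^{\eta(i_1)}_{n,i_2}\circ\cdots\circ\psi^{\eta(i_1\cdots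 i_{m-1})}_{n,i_m}$ for $w=i_1\cdots i_m$. Then $K^\eta=\bigcap_{m\ge0}\bigcup_{w\in\mathcal{A}_n^m}\phi^\eta_w([0,1]^2)$. *)

theory Defs
  imports "HOL-Analysis.Analysis"
begin

definition hausdorff_pre :: "real \<Rightarrow> real \<Rightarrow> 'a::metric_space set \<Rightarrow> ennreal" where
  "hausdorff_pre s \<delta> A =
     (INF U \<in> {U :: nat \<Rightarrow> 'a set. A \<subseteq> (\<Union>i. U i) \<and> (\<forall>i. bounded (U i) \<and> diameter (U i) \<le> \<delta>)}.
        (\<Sum>i. ennreal (diameter (U i) powr s)))"

definition hausdorff_measure :: "real \<Rightarrow> 'a::metric_space set \<Rightarrow> ennreal" where
  "hausdorff_measure s A = (SUP \<delta> \<in> {0<..}. hausdorff_pre s \<delta> A)"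

definition alphabet :: "nat \<Rightarrow> nat set" where
  "alphabet n = {1..5*n-6}"

text \<open>Grid indices (a,b) of the squares [a/n,(a+1)/n] x [b/n,(b+1)/n] meeting the boundary of the unit square.\<close>
definition boundary_cells :: "nat \<Rightarrow> (nat \<times> nat) set" where
  "boundary_cells n = {(a,b). a < n \<and> b < n \<and> (a = 0 \<or> a = n - 1 \<or> b = 0 \<or> b = n - 1)}"

text \<open>Translation part of psi^k_{n,j}; e is the fixed enumeration of the boundary squares.\<close>
definition psi_off :: "nat \<Rightarrow> (nat \<Rightarrow> nat \<times> nat) \<Rightarrow> nat \<Rightarrow> nat \<Rightarrow> real \<times> real" where
  "psi_off n e k j =
     (if j \<le> 4*n - 4 then (real (fst (e j)) / real n, real (snd (e j)) / real n)
      else if j \<le> 4*n + n div 2 - 5 then (1/2 + real (j - (4*n - 3)) / real n, 1 / real n)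
      else (real (j - (4*n + n div 2 - 4) + 1) / real n, if k = 1 then 2 / real n else 1 / real n))"

definition psi :: "nat \<Rightarrow> (nat \<Rightarrow> nat \<times> nat) \<Rightarrow> nat \<Rightarrow> nat \<Rightarrow> real \<times> real \<Rightarrow> real \<times> real" where
  "psi n e k j x = (1 / real n) *\<^sub>R x + psi_off n e k j"

text \<open>phi^eta_w = psi^{eta(eps)}_{i1} o psi^{eta(i1)}_{i2} o ... o psi^{eta(i1...i_{m-1})}_{im}.\<close>
definition phi :: "nat \<Rightarrow> (nat \<Rightarrow> nat \<times> nat) \<Rightarrow> (nat list \<Rightarrow> nat) \<Rightarrow> nat list \<Rightarrow> real \<times> real \<Rightarrow> real \<times> real" where
  "phi n e \<eta> w = foldr (\<circ>) (map (\<lambda>k. psi n e (\<eta> (take k w)) (w ! k)) [0..<length w]) id"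

definition choice_fun :: "nat \<Rightarrow> (nat list \<Rightarrow> nat) \<Rightarrow> bool" where
  "choice_fun n \<eta> \<longleftrightarrow> (\<forall>w \<in> lists (alphabet n). \<eta> w \<in> {1,2})"

definition unit_square :: "(real \<times> real) set" where
  "unit_square = {0..1} \<times> {0..1}"

definition K :: "nat \<Rightarrow> (nat \<Rightarrow> nat \<times> nat) \<Rightarrow> (nat list \<Rightarrow> nat) \<Rightarrow> (real \<times> real) set" where
  "K n e \<eta> = (\<Inter>m. \<Union>w \<in> {w \<in> lists (alphabet n). length w = m}. phi n e \<eta> w ` unit_square)"

definition alpha :: "nat \<Rightarrow> real" where
  "alpha n = ln (real (5*n - 6)) / ln (real n)"

end

theory Submission
  imports Defs
begin

text \<open>
  Write N = 5n - 6, so that n powr alpha n = N. Each map phi^eta_w is x \<mapsto> n^-|w| (x + a) for an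
  integer point a, the address of w, and since the first-generation squares are distinct grid
  squares, distinct words of the same length have distinct addresses. So the cells of level m are
  N^m distinct squares of the grid of mesh n^-m, each of which meets K^eta.

  A ball of radius r \<le> n^-m meets at most 16 cells of level m; covering these by their
  descendants of a deep level gives H^alpha \<le> 16 * 2^alpha * N^-m, i.e. the upper bound.
  For the lower bound, a ball of radius r around a point of K^eta contains a whole cell of level M
  with n^-M comparable to r. Enlarge the sets of a cover of this cell to finitely many balls; a ball
  of radius t, n^-(k+1) < t \<le> n^-k, meets at most 16 cells of level k, and counting the
  descendants of all these cells at a common deep level gives N^-M \<le> 16 * \<Sum> N^-k, which is at
  most 16 N \<Sum> t^alpha: the mass distribution principle for the weight N^-m of a cell of level m.
\<close>

section \<open>Covers and Hausdorff measure\<close>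

lemma hausdorff_pre_mono: "A \<subseteq> B \<Longrightarrow> hausdorff_pre s \<delta> A \<le> hausdorff_pre s \<delta> B"
  unfolding hausdorff_pre_def by (rule INF_superset_mono) auto

lemma hausdorff_measure_mono: "A \<subseteq> B \<Longrightarrow> hausdorff_measure s A \<le> hausdorff_measure s B"
  unfolding hausdorff_measure_def by (intro SUP_mono) (auto intro: hausdorff_pre_mono)

lemma hausdorff_pre_le_measure: "0 < \<delta> \<Longrightarrow> hausdorff_pre s \<delta> A \<le> hausdorff_measure s A"
  unfolding hausdorff_measure_def by (rule SUP_upper) simp

lemma hausdorff_pre_le_finite_cover:
  assumes "finite F" "A \<subseteq> (\<Union>i\<in>F. V i)"
    and "\<And>i. i \<in> F \<Longrightarrow> bounded (V i) \<and> diameter (V i) \<le> \<delta>" and "0 \<le> \<delta>"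
  shows "hausdorff_pre s \<delta> A \<le> ennreal (\<Sum>i\<in>F. diameter (V i) powr s)"
proof -
  obtain xs where xs: "set xs = F" "distinct xs" using finite_distinct_list[OF \<open>finite F\<close>] by blast
  define U where "U i = (if i < length xs then V (xs ! i) else {})" for i
  have "A \<subseteq> (\<Union>i. U i)"
    using assms(2) by (force simp: U_def xs(1)[symmetric] in_set_conv_nth)
  moreover have "bounded (U i) \<and> diameter (U i) \<le> \<delta>" for i
    using assms(3,4) xs(1) by (auto simp: U_def)
  ultimately have "hausdorff_pre s \<delta> A \<le> (\<Sum>i. ennreal (diameter (U i) powr s))"
    unfolding hausdorff_pre_def by (intro INF_lower) blast
  also have "\<dots> = (\<Sum>i<length xs. ennreal (diameter (V (xs ! i)) powr s))"
    by (subst suminf_finite[of "{..<length xs}"]) (auto simp: U_def)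
  also have "\<dots> = ennreal (sum_list (map (\<lambda>i. diameter (V i) powr s) xs))"
    by (simp add: sum_list_sum_nth atLeast0LessThan)
  also have "\<dots> = ennreal (\<Sum>i\<in>F. diameter (V i) powr s)"
    using xs by (simp add: sum_list_distinct_conv_sum_set)
  finally show ?thesis .
qed

lemma compact_finite_ball_cover:
  fixes A :: "'a::metric_space set"
  assumes "compact A" "A \<subseteq> (\<Union>i. U i)" "\<And>i. bounded (U i)" "\<And>i. diameter (U i) < t i"
  obtains F z where "finite F" "A \<subseteq> (\<Union>i\<in>F. ball (z i) (t i))"
proof -
  define z where "z i = (SOME y. y \<in> U i)" for i
  have U_ball: "U i \<subseteq> ball (z i) (t i)" for i
  proof
    fix y assume "y \<in> U i"
    then have "z i \<in> U i" unfolding z_def by (rule someI)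
    with assms(3) have "dist (z i) y \<le> diameter (U i)"
      using \<open>y \<in> U i\<close> by (rule diameter_bounded_bound)
    then show "y \<in> ball (z i) (t i)" using assms(4)[of i] by simp
  qed
  have A_cover: "A \<subseteq> (\<Union>i\<in>UNIV. ball (z i) (t i))"
    using assms(2) UN_mono[OF subset_refl U_ball] by (rule order_trans)
  obtain F where "finite F" "A \<subseteq> (\<Union>i\<in>F. ball (z i) (t i))"
    by (rule compactE_image[OF assms(1) _ A_cover]) auto
  then show thesis by (rule that)
qed

lemma exists_enlarged_radii:
  fixes d :: "nat \<Rightarrow> real"
  assumes "0 < s" "0 < \<delta>" "0 < \<epsilon>" "\<And>i. 0 \<le> d i \<and> d i \<le> \<delta>"
  obtains \<rho> where "\<And>i. d i < 2 * \<rho> i \<and> 0 < \<rho> i \<and> \<rho> i \<le> \<delta>"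
    and "\<And>F. finite F \<Longrightarrow> (\<Sum>i\<in>F. \<rho> i powr s) \<le> (\<Sum>i\<in>F. d i powr s) + \<epsilon>"
proof -
  define \<epsilon>' where "\<epsilon>' = (\<lambda>i. \<epsilon> * (1/2) ^ Suc i)"
  define \<rho> where "\<rho> i = max (d i) (min \<delta> (\<epsilon>' i powr (1/s)))" for i
  have \<epsilon>'_pos: "0 < \<epsilon>' i" for i using \<open>0 < \<epsilon>\<close> by (simp add: \<epsilon>'_def)
  have \<rho>_pos: "0 < \<rho> i" and \<rho>_ge: "d i \<le> \<rho> i" and \<rho>_le: "\<rho> i \<le> \<delta>" for i
    using \<epsilon>'_pos[of i] \<open>0 < \<delta>\<close> assms(4)[of i] by (simp_all add: \<rho>_def max.strict_coboundedI2)
  have radii: "d i < 2 * \<rho> i \<and> 0 < \<rho> i \<and> \<rho> i \<le> \<delta>" for i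
    using \<rho>_pos[of i] \<rho>_ge[of i] \<rho>_le[of i] by linarith
  have \<rho>_powr: "\<rho> i powr s \<le> d i powr s + \<epsilon>' i" for i
  proof -
    have "min \<delta> (\<epsilon>' i powr (1/s)) powr s \<le> (\<epsilon>' i powr (1/s)) powr s"
      using \<open>0 < \<delta>\<close> \<open>0 < s\<close> \<epsilon>'_pos[of i] by (intro powr_mono2) auto
    also have "\<dots> = \<epsilon>' i" using \<open>0 < s\<close> \<epsilon>'_pos[of i] by (simp add: powr_powr)
    finally show ?thesis
      using assms(4)[of i] \<epsilon>'_pos[of i] by (simp add: \<rho>_def max_def add_increasing2 add_increasing)
  qed
  have "\<epsilon>' sums \<epsilon>"
    unfolding \<epsilon>'_def using sums_mult[OF power_half_series, of \<epsilon>] by simp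
  have "(\<Sum>i\<in>F. \<rho> i powr s) \<le> (\<Sum>i\<in>F. d i powr s) + \<epsilon>" if "finite F" for F
  proof -
    have "(\<Sum>i\<in>F. \<epsilon>' i) \<le> \<epsilon>"
      using sum_le_suminf[of \<epsilon>' F] \<open>\<epsilon>' sums \<epsilon>\<close> \<epsilon>'_pos that
      unfolding sums_iff by (simp add: less_imp_le)
    moreover have "(\<Sum>i\<in>F. \<rho> i powr s) \<le> (\<Sum>i\<in>F. d i powr s + \<epsilon>' i)"
      by (rule sum_mono) (rule \<rho>_powr)
    ultimately show ?thesis
      by (simp add: sum.distrib)
  qed
  with radii show thesis by (rule that)
qed

text \<open>Each set U i of a countable cover lies in the ball of radius 2 rho i around any of its
  points, where rho i powr s exceeds diameter (U i) powr s by a summable error; compactness leaves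
  finitely many of these balls. Passing from diameters to radii costs the factor 2 powr s.\<close>

lemma hausdorff_pre_ge_ball_covers:
  fixes A :: "'a::metric_space set"
  assumes "compact A" "0 < s" "0 < \<delta>"
    and balls: "\<And>(F :: nat set) z t. finite F \<Longrightarrow> A \<subseteq> (\<Union>i\<in>F. ball (z i) (t i)) \<Longrightarrow>
                  (\<And>i. i \<in> F \<Longrightarrow> 0 < t i \<and> t i \<le> 2 * \<delta>) \<Longrightarrow> c \<le> (\<Sum>i\<in>F. t i powr s)"
  shows "ennreal (c / 2 powr s) \<le> hausdorff_pre s \<delta> A"
  unfolding hausdorff_pre_def
proof (rule INF_greatest, safe)
  fix U :: "nat \<Rightarrow> 'a set"
  assume cover: "A \<subseteq> (\<Union>i. U i)" and U: "\<forall>i. bounded (U i) \<and> diameter (U i) \<le> \<delta>"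
  define d where "d i = diameter (U i)" for i
  show "ennreal (c / 2 powr s) \<le> (\<Sum>i. ennreal (d i powr s))"
  proof (rule ennreal_le_epsilon)
    fix \<epsilon> :: real assume "0 < \<epsilon>"
    obtain \<rho> where \<rho>: "\<And>i. d i < 2 * \<rho> i \<and> 0 < \<rho> i \<and> \<rho> i \<le> \<delta>"
      and \<rho>_sum: "\<And>F. finite F \<Longrightarrow> (\<Sum>i\<in>F. \<rho> i powr s) \<le> (\<Sum>i\<in>F. d i powr s) + \<epsilon>"
      by (rule exists_enlarged_radii[where d = d, OF \<open>0 < s\<close> \<open>0 < \<delta>\<close> \<open>0 < \<epsilon>\<close>])
         (use U in \<open>auto simp: d_def diameter_ge_0\<close>)
    have "bounded (U i)" "diameter (U i) < 2 * \<rho> i" for i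
      using U \<rho>[of i] by (simp_all add: d_def)
    then obtain F z where F: "finite F" "A \<subseteq> (\<Union>i\<in>F. ball (z i) (2 * \<rho> i))"
      by (rule compact_finite_ball_cover[OF assms(1) cover])
    have "c \<le> (\<Sum>i\<in>F. (2 * \<rho> i) powr s)"
      using balls[of F z "\<lambda>i. 2 * \<rho> i"] F \<rho> by simp
    also have "\<dots> = 2 powr s * (\<Sum>i\<in>F. \<rho> i powr s)"
      using \<rho> by (simp add: powr_mult sum_distrib_left less_imp_le)
    also have "\<dots> \<le> 2 powr s * ((\<Sum>i\<in>F. d i powr s) + \<epsilon>)"
      using \<rho>_sum[OF F(1)] by (rule mult_left_mono) simp
    finally have "ennreal (c / 2 powr s) \<le> ennreal ((\<Sum>i\<in>F. d i powr s) + \<epsilon>)"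
      by (intro ennreal_leI) (simp add: pos_divide_le_eq mult.commute)
    also have "\<dots> = (\<Sum>i\<in>F. ennreal (d i powr s)) + ennreal \<epsilon>"
      using \<open>0 < \<epsilon>\<close> by (simp add: sum_nonneg)
    also have "\<dots> \<le> (\<Sum>i. ennreal (d i powr s)) + ennreal \<epsilon>"
      using F(1) by (intro add_right_mono sum_le_suminf) auto
    finally show "ennreal (c / 2 powr s) \<le> (\<Sum>i. ennreal (d i powr s)) + ennreal \<epsilon>" .
  qed
qed

section \<open>Words over a finite alphabet\<close>

definition words :: "'a set \<Rightarrow> nat \<Rightarrow> 'a list set" where
  "words A m = {w \<in> lists A. length w = m}"

lemma words_conv: "words A m = {w. set w \<subseteq> A \<and> length w = m}"
  by (auto simp: words_def)

lemma finite_words: "finite A \<Longrightarrow> finite (words A m)"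
  by (simp add: words_conv finite_lists_length_eq)

lemma card_words: "finite A \<Longrightarrow> card (words A m) = card A ^ m"
  by (simp add: words_conv card_lists_length_eq)

lemma take_in_words: "u \<in> words A m \<Longrightarrow> k \<le> m \<Longrightarrow> take k u \<in> words A k"
  by (auto simp: words_def dest: in_set_takeD)

lemma card_extensions_le:
  assumes "finite A" "S \<subseteq> words A k"
  shows "card {u \<in> words A L. take k u \<in> S} \<le> card S * card A ^ (L - k)"
proof -
  have "inj_on (\<lambda>u. (take k u, drop k u)) {u \<in> words A L. take k u \<in> S}"
    by (rule inj_onI) (metis append_take_drop_id prod.inject)
  moreover have "(\<lambda>u. (take k u, drop k u)) ` {u \<in> words A L. take k u \<in> S} \<subseteq> S \<times> words A (L - k)"
    by (auto simp: words_def dest: in_set_dropD)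
  moreover have "finite (S \<times> words A (L - k))"
    using assms finite_subset[OF assms(2)] by (simp add: finite_words)
  ultimately have "card {u \<in> words A L. take k u \<in> S} \<le> card (S \<times> words A (L - k))"
    by (intro card_inj_on_le)
  then show ?thesis by (simp add: card_cartesian_product card_words assms(1))
qed

lemma card_extensions_ge:
  assumes "finite A" "w \<in> words A M" "M \<le> L"
  shows "card A ^ (L - M) \<le> card {u \<in> words A L. take M u = w}"
proof -
  have "inj_on ((@) w) (words A (L - M))" by (rule inj_onI) simp
  moreover have "(@) w ` words A (L - M) \<subseteq> {u \<in> words A L. take M u = w}"
    using assms(2,3) by (auto simp: words_def)
  moreover have "finite {u \<in> words A L. take M u = w}" by (simp add: finite_words assms(1))
  ultimately have "card (words A (L - M)) \<le> card {u \<in> words A L. take M u = w}"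
    by (intro card_inj_on_le)
  then show ?thesis by (simp add: card_words assms(1))
qed

text \<open>The counting behind the mass distribution principle, for the uniform weight on words.\<close>

lemma prefix_cover_weight:
  assumes A: "finite A" "A \<noteq> {}" and w: "w \<in> words A M" and F: "finite F"
    and S: "\<And>i. i \<in> F \<Longrightarrow> S i \<subseteq> words A (k i) \<and> k i \<le> L" and "M \<le> L"
    and cover: "\<And>u. u \<in> words A L \<Longrightarrow> take M u = w \<Longrightarrow> \<exists>i\<in>F. take (k i) u \<in> S i"
  shows "1 / real (card A) ^ M \<le> (\<Sum>i\<in>F. real (card (S i)) / real (card A) ^ k i)"
proof -
  define N where "N = real (card A)"
  have N: "N > 0" using A by (simp add: N_def card_gt_0_iff)
  define X where "X i = {u \<in> words A L. take (k i) u \<in> S i}" for i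
  have "card A ^ (L - M) \<le> card {u \<in> words A L. take M u = w}"
    by (rule card_extensions_ge[OF A(1) w \<open>M \<le> L\<close>])
  also have "\<dots> \<le> card (\<Union>i\<in>F. X i)"
    using cover F A(1) by (intro card_mono) (auto simp: X_def finite_words)
  also have "\<dots> \<le> (\<Sum>i\<in>F. card (X i))"
    using F by (rule card_UN_le)
  also have "\<dots> \<le> (\<Sum>i\<in>F. card (S i) * card A ^ (L - k i))"
    unfolding X_def using A(1) S by (intro sum_mono card_extensions_le) auto
  finally have "real (card A ^ (L - M)) \<le> real (\<Sum>i\<in>F. card (S i) * card A ^ (L - k i))"
    by (rule of_nat_mono)
  then have "N ^ (L - M) \<le> (\<Sum>i\<in>F. card (S i) * N ^ (L - k i))"
    by (simp add: N_def)
  moreover have "N ^ (L - M) = N ^ L * (1 / N ^ M)"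
    using N \<open>M \<le> L\<close> by (simp add: power_diff)
  moreover have "(\<Sum>i\<in>F. card (S i) * N ^ (L - k i)) = N ^ L * (\<Sum>i\<in>F. card (S i) / N ^ k i)"
    unfolding sum_distrib_left using N S by (intro sum.cong) (auto simp: power_diff)
  ultimately have "N ^ L * (1 / N ^ M) \<le> N ^ L * (\<Sum>i\<in>F. card (S i) / N ^ k i)"
    by simp
  then show ?thesis
    unfolding N_def[symmetric] by (rule mult_left_le_imp_le) (use N in simp)
qed

section \<open>Grid squares\<close>

lemma power_powr: "(x ^ k) powr a = (x powr a) ^ k" for x :: real
  by (induction k) (simp_all add: powr_mult)

lemma exists_power_interval:
  fixes b t :: real
  assumes "1 < b" "0 < t" "t \<le> 1"
  obtains k where "1 / b ^ Suc k < t" "t \<le> 1 / b ^ k"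
proof -
  have "1 / b < 1" using assms(1) by simp
  then obtain k where "(1 / b) ^ k < t" using real_arch_pow_inv[OF assms(2)] by blast
  then have "\<exists>k. 1 / b ^ k < t" by (auto simp: power_one_over)
  moreover have "\<not> 1 / b ^ 0 < t" using assms(3) by simp
  ultimately show thesis using exists_least_lemma[of "\<lambda>k. 1 / b ^ k < t"] that by force
qed

lemma nat_mult_add_cancel:
  fixes a b c d m :: nat
  assumes "c < m" "d < m" "m * a + c = m * b + d"
  shows "a = b \<and> c = d"
proof -
  have "a = (m * a + c) div m" "b = (m * b + d) div m" using assms(1,2) by simp_all
  then show ?thesis using assms(3) by simp
qed

definition grid_square :: "real \<Rightarrow> nat \<times> nat \<Rightarrow> (real \<times> real) set" where
  "grid_square h c = {h * fst c .. h * (fst c + 1)} \<times> {h * snd c .. h * (snd c + 1)}"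

lemma grid_square_eq_cbox:
  "grid_square h c = cbox (h * fst c, h * snd c) (h * (fst c + 1), h * (snd c + 1))"
  unfolding grid_square_def cbox_Pair_eq by (simp add: cbox_interval)

lemma compact_grid_square: "compact (grid_square h c)"
  by (simp add: grid_square_eq_cbox)

lemma diameter_grid_square:
  assumes "0 \<le> h"
  shows "diameter (grid_square h c) \<le> 2 * h"
proof -
  have "diameter (grid_square h c) = dist (h * fst c, h * snd c) (h * (fst c + 1), h * (snd c + 1))"
    unfolding grid_square_eq_cbox using assms
    by (intro diameter_cbox) (auto simp: Basis_prod_def algebra_simps)
  also have "\<dots> = sqrt (2 * h\<^sup>2)"
    by (simp add: dist_Pair_Pair dist_real_def power2_eq_square algebra_simps)
  also have "\<dots> = sqrt 2 * h"
    using assms by (simp add: real_sqrt_mult)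
  also have "\<dots> \<le> 2 * h"
    using assms sqrt2_less_2 by (intro mult_right_mono) auto
  finally show ?thesis .
qed

lemma unit_square_eq_cbox: "unit_square = cbox (0, 0) (1, 1)"
  unfolding unit_square_def cbox_Pair_eq by (simp add: cbox_interval)

lemma card_grid_squares_meeting_cball:
  assumes "0 < h" "inj_on c W"
  shows "card {w \<in> W. grid_square h (c w) \<inter> cball z h \<noteq> {}} \<le> 16"
proof -
  define W' where "W' = {w \<in> W. grid_square h (c w) \<inter> cball z h \<noteq> {}}"
  define box where "box t = {nat \<lceil>t / h - 2\<rceil> ..< nat \<lceil>t / h - 2\<rceil> + 4}" for t
  have near: "m \<in> box t" if "h * m \<le> s" "s \<le> h * (m + 1)" "\<bar>s - t\<bar> \<le> h" for m :: nat and s t :: real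
  proof -
    have "t / h - 2 \<le> m" "m \<le> t / h + 1"
      using that \<open>0 < h\<close> by (auto simp: field_simps abs_le_iff)
    then show ?thesis unfolding box_def by (simp, linarith)
  qed
  have "c ` W' \<subseteq> box (fst z) \<times> box (snd z)"
  proof
    fix p assume "p \<in> c ` W'"
    then obtain y where "y \<in> grid_square h p" "dist z y \<le> h"
      by (auto simp: W'_def)
    moreover have "\<bar>fst y - fst z\<bar> \<le> dist z y" "\<bar>snd y - snd z\<bar> \<le> dist z y"
      using dist_fst_le[of z y] dist_snd_le[of z y] by (simp_all add: dist_real_def abs_minus_commute)
    ultimately show "p \<in> box (fst z) \<times> box (snd z)"
      using near[of "fst p" "fst y" "fst z"] near[of "snd p" "snd y" "snd z"]
      by (auto simp: grid_square_def mem_Times_iff)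
  qed
  moreover have "inj_on c W'" using assms(2) by (rule inj_on_subset) (auto simp: W'_def)
  ultimately have "card W' \<le> card (box (fst z) \<times> box (snd z))"
    by (intro card_inj_on_le) (auto simp: box_def)
  then show ?thesis by (simp add: W'_def box_def card_cartesian_product)
qed

section \<open>The cells of the construction\<close>

lemma foldr_comp_eq: "foldr (\<circ>) fs g = foldr (\<circ>) fs id \<circ> g"
  by (induction fs) (auto simp: comp_assoc)

lemma phi_Nil: "phi n e \<eta> [] = id"
  by (simp add: phi_def)

lemma phi_snoc: "phi n e \<eta> (w @ [j]) = phi n e \<eta> w \<circ> psi n e (\<eta> w) j"
proof -
  define f where "f v k = psi n e (\<eta> (take k v)) (v ! k)" for v k
  have prefix: "map (f (w @ [j])) [0..<length w] = map (f w) [0..<length w]"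
    by (auto simp: f_def nth_append)
  have last: "f (w @ [j]) (length w) = psi n e (\<eta> w) j"
    by (simp add: f_def)
  show ?thesis
    unfolding phi_def f_def[symmetric]
    by (simp add: prefix last foldr_comp_eq[of _ "psi n e (\<eta> w) j"])
qed

locale carpet =
  fixes n :: nat and e :: "nat \<Rightarrow> nat \<times> nat"
  assumes n_ge_4: "4 \<le> n" and even_n: "even n"
    and e_bij: "bij_betw e {1..4*n-4} (boundary_cells n)"
begin

definition digit :: "nat \<Rightarrow> nat \<Rightarrow> nat \<times> nat" where
  "digit k j = (if j \<le> 4*n - 4 then e j
      else if j \<le> 4*n + n div 2 - 5 then (n div 2 + (j - (4*n - 3)), 1)
      else (j - (4*n + n div 2 - 4) + 1, if k = 1 then 2 else 1))"

lemma psi_eq_digit: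
  "psi n e k j x = (1 / real n) *\<^sub>R (x + (real (fst (digit k j)), real (snd (digit k j))))"
proof -
  have "real (n div 2) = real n / 2" using even_n by auto
  then show ?thesis using n_ge_4
    by (auto simp: psi_def psi_off_def digit_def prod_eq_iff field_simps)
qed

lemma digit_boundary: "j \<in> {1..4*n-4} \<Longrightarrow> digit k j = e j \<and> e j \<in> boundary_cells n"
  using e_bij by (auto simp: digit_def bij_betw_def)

lemma digit_interior:
  assumes "j \<in> alphabet n" "4*n - 4 < j"
  shows "1 \<le> fst (digit k j) \<and> fst (digit k j) \<le> n - 2 \<and> 1 \<le> snd (digit k j) \<and> snd (digit k j) \<le> 2"
  using assms n_ge_4 even_n by (auto simp: digit_def alphabet_def elim!: evenE)

lemma digit_less: "j \<in> alphabet n \<Longrightarrow> fst (digit k j) < n \<and> snd (digit k j) < n"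
  using digit_boundary[of j k] digit_interior[of j k] n_ge_4
  by (cases "j \<le> 4*n-4") (auto simp: alphabet_def boundary_cells_def)

lemma digit_interior_inverse:
  assumes "j \<in> alphabet n" "4*n - 4 < j"
  shows "j = (if n div 2 \<le> fst (digit k j) then fst (digit k j) + 4*n - 3 - n div 2
              else fst (digit k j) + 4*n + n div 2 - 5)"
proof -
  obtain h where h: "n = 2 * h" using even_n by blast
  have "j \<le> 10 * h - 6" "8 * h - 4 < j" "2 \<le> h"
    using assms n_ge_4 unfolding h alphabet_def by auto
  then show ?thesis unfolding digit_def unfolding h by auto
qed

lemma inj_on_digit: "inj_on (digit k) (alphabet n)"
proof (rule inj_onI)
  fix i j assume i: "i \<in> alphabet n" and j: "j \<in> alphabet n" and eq: "digit k i = digit k j"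
  have not_boundary: "digit k l \<notin> boundary_cells n" if "l \<in> alphabet n" "4*n - 4 < l" for l
    using digit_interior[OF that, of k] n_ge_4 by (auto simp: boundary_cells_def)
  consider "i \<le> 4*n-4" "j \<le> 4*n-4" | "4*n-4 < i" "4*n-4 < j" | "i \<le> 4*n-4 \<longleftrightarrow> \<not> j \<le> 4*n-4"
    by linarith
  then show "i = j"
  proof cases
    case 1
    then have "i \<in> {1..4*n-4}" "j \<in> {1..4*n-4}" using i j by (auto simp: alphabet_def)
    moreover from this have "e i = e j" using eq digit_boundary by metis
    ultimately show ?thesis using e_bij by (auto simp: bij_betw_def dest: inj_onD)
  next
    case 2
    then show ?thesis
      using digit_interior_inverse[OF i, of k] digit_interior_inverse[OF j, of k] eq by metis
  next
    case 3
    then show ?thesis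
      using i j eq digit_boundary[of i k] digit_boundary[of j k] not_boundary[OF i] not_boundary[OF j]
      by (auto simp: alphabet_def)
  qed
qed

primrec address_upto :: "(nat list \<Rightarrow> nat) \<Rightarrow> nat list \<Rightarrow> nat \<Rightarrow> nat \<times> nat" where
  "address_upto \<eta> w 0 = (0, 0)"
| "address_upto \<eta> w (Suc k) =
     (n * fst (address_upto \<eta> w k) + fst (digit (\<eta> (take k w)) (w ! k)),
      n * snd (address_upto \<eta> w k) + snd (digit (\<eta> (take k w)) (w ! k)))"

definition address :: "(nat list \<Rightarrow> nat) \<Rightarrow> nat list \<Rightarrow> nat \<times> nat" where
  "address \<eta> w = address_upto \<eta> w (length w)"

lemma address_Nil: "address \<eta> [] = (0, 0)"
  by (simp add: address_def)

lemma address_snoc: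
  "address \<eta> (w @ [j]) = (n * fst (address \<eta> w) + fst (digit (\<eta> w) j),
                             n * snd (address \<eta> w) + snd (digit (\<eta> w) j))"
proof -
  have "address_upto \<eta> (w @ v) k = address_upto \<eta> w k" if "k \<le> length w" for v k
    using that by (induction k) (auto simp: nth_append)
  then show ?thesis by (simp add: address_def)
qed

lemma phi_eq_address:
  "phi n e \<eta> w x = (1 / real n ^ length w) *\<^sub>R x
                     + (1 / real n ^ length w) *\<^sub>R (real (fst (address \<eta> w)), real (snd (address \<eta> w)))"
proof (induction w arbitrary: x rule: rev_induct)
  case Nil
  then show ?case by (simp add: phi_Nil address_Nil zero_prod_def)
next
  case (snoc j w)
  then show ?case using n_ge_4
    by (simp add: phi_snoc psi_eq_digit address_snoc prod_eq_iff field_simps)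
qed

definition cell :: "(nat list \<Rightarrow> nat) \<Rightarrow> nat list \<Rightarrow> (real \<times> real) set" where
  "cell \<eta> w = phi n e \<eta> w ` unit_square"

lemma cell_eq_grid_square: "cell \<eta> w = grid_square (1 / real n ^ length w) (address \<eta> w)"
  unfolding cell_def phi_eq_address[abs_def] unit_square_eq_cbox image_affinity_cbox
  by (simp add: grid_square_eq_cbox cbox_Pair_eq_0 algebra_simps)

lemma inj_on_address: "inj_on (address \<eta>) (words (alphabet n) m)"
proof (induction m)
  case 0
  then show ?case by (auto simp: words_def intro: inj_onI)
next
  case (Suc m)
  show ?case
  proof (rule inj_onI)
    fix u u' assume u: "u \<in> words (alphabet n) (Suc m)" and u': "u' \<in> words (alphabet n) (Suc m)"
      and eq: "address \<eta> u = address \<eta> u'"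
    obtain w j where w: "u = w @ [j]" "w \<in> words (alphabet n) m" "j \<in> alphabet n"
      using u by (cases u rule: rev_cases) (auto simp: words_def)
    obtain w' j' where w': "u' = w' @ [j']" "w' \<in> words (alphabet n) m" "j' \<in> alphabet n"
      using u' by (cases u' rule: rev_cases) (auto simp: words_def)
    have "n * fst (address \<eta> w) + fst (digit (\<eta> w) j) = n * fst (address \<eta> w') + fst (digit (\<eta> w') j')"
      "n * snd (address \<eta> w) + snd (digit (\<eta> w) j) = n * snd (address \<eta> w') + snd (digit (\<eta> w') j')"
      using eq by (simp_all add: w(1) w'(1) address_snoc)
    then have "address \<eta> w = address \<eta> w' \<and> digit (\<eta> w) j = digit (\<eta> w') j'"
      using digit_less[OF w(3), of "\<eta> w"] digit_less[OF w'(3), of "\<eta> w'"]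
      by (auto simp: prod_eq_iff dest: nat_mult_add_cancel[rotated 2])
    then have "w = w'" "digit (\<eta> w) j = digit (\<eta> w) j'"
      using Suc.IH w(2) w'(2) by (auto dest: inj_onD)
    then show "u = u'"
      using inj_on_digit w w' by (auto dest: inj_onD)
  qed
qed

lemma card_cells_meeting_cball:
  "card {w \<in> words (alphabet n) k. cell \<eta> w \<inter> cball z (1 / real n ^ k) \<noteq> {}} \<le> 16"
proof -
  have "0 < 1 / real n ^ k" using n_ge_4 by simp
  moreover have "{w \<in> words (alphabet n) k. cell \<eta> w \<inter> cball z (1 / real n ^ k) \<noteq> {}}
    = {w \<in> words (alphabet n) k. grid_square (1 / real n ^ k) (address \<eta> w) \<inter> cball z (1 / real n ^ k) \<noteq> {}}"
    by (auto simp: cell_eq_grid_square words_def)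
  ultimately show ?thesis
    using card_grid_squares_meeting_cball[OF _ inj_on_address] by simp
qed

lemma psi_unit_square:
  assumes "j \<in> alphabet n"
  shows "psi n e k j ` unit_square \<subseteq> unit_square"
proof -
  have "real (fst (digit k j)) + 1 \<le> real n" "real (snd (digit k j)) + 1 \<le> real n"
    using digit_less[OF assms, of k] by (simp_all add: Suc_le_eq flip: of_nat_Suc)
  moreover have "0 < real n" using n_ge_4 by simp
  ultimately show ?thesis
    by (auto simp: psi_eq_digit unit_square_def mem_Times_iff pos_divide_le_eq)
qed

lemma cell_snoc_subset: "j \<in> alphabet n \<Longrightarrow> cell \<eta> (w @ [j]) \<subseteq> cell \<eta> w"
  unfolding cell_def phi_snoc image_comp[symmetric] by (intro image_mono psi_unit_square)

lemma cell_subset_take: "u \<in> lists (alphabet n) \<Longrightarrow> cell \<eta> u \<subseteq> cell \<eta> (take k u)"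
proof (induction u rule: rev_induct)
  case (snoc j v)
  then show ?case
    using cell_snoc_subset[of j \<eta> v] by (cases "k \<le> length v") auto
qed simp

lemma K_eq_cells: "K n e \<eta> = (\<Inter>m. \<Union>w\<in>words (alphabet n) m. cell \<eta> w)"
  by (simp add: K_def words_def cell_def)

lemma compact_cell: "compact (cell \<eta> w)"
  by (simp add: cell_eq_grid_square compact_grid_square)

lemma closed_K: "closed (K n e \<eta>)"
  unfolding K_eq_cells
  by (intro closed_INT ballI closed_UN finite_words compact_imp_closed compact_cell)
     (simp add: alphabet_def)

lemma cell_subset_cball:
  assumes "x \<in> cell \<eta> w" "2 / real n ^ length w \<le> r"
  shows "cell \<eta> w \<subseteq> cball x r"
proof
  fix y assume "y \<in> cell \<eta> w"
  then have "dist x y \<le> diameter (cell \<eta> w)"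
    using assms(1) compact_cell by (intro diameter_bounded_bound compact_imp_bounded)
  also have "\<dots> \<le> 2 / real n ^ length w"
    using diameter_grid_square[of "1 / real n ^ length w"] by (simp add: cell_eq_grid_square)
  finally show "y \<in> cball x r" using assms(2) by simp
qed

lemma phi_append_fixed_point:
  assumes "\<And>k. psi n e k 1 p = p"
  shows "phi n e \<eta> (w @ replicate j 1) p = phi n e \<eta> w p"
proof (induction j arbitrary: w)
  case (Suc j)
  have "phi n e \<eta> (w @ replicate (Suc j) 1) p = phi n e \<eta> ((w @ [1]) @ replicate j 1) p"
    by simp
  also have "\<dots> = phi n e \<eta> (w @ [1]) p"
    by (rule Suc.IH)
  finally show ?case
    using assms by (simp add: phi_snoc)
qed simp

text \<open>Symbol 1 names a boundary square, so its map does not depend on the choice and has a fixed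
  point in the unit square; padding a word with 1s keeps that point in all deeper cells.\<close>

lemma K_meets_cell:
  assumes "w \<in> lists (alphabet n)"
  shows "\<exists>y\<in>K n e \<eta>. y \<in> cell \<eta> w"
proof -
  define p where "p = (real (fst (e 1)) / (real n - 1), real (snd (e 1)) / (real n - 1))"
  have e1: "e 1 \<in> boundary_cells n" "digit k 1 = e 1" for k
    using digit_boundary[of 1 k] n_ge_4 by auto
  then have "p \<in> unit_square"
    using n_ge_4 by (auto simp: p_def unit_square_def boundary_cells_def divide_simps)
  have fixed: "psi n e k 1 p = p" for k
    using n_ge_4 e1(2)[of k] by (simp add: psi_eq_digit p_def prod_eq_iff field_simps)
  have 1: "1 \<in> alphabet n" using n_ge_4 by (simp add: alphabet_def)
  have in_cell: "phi n e \<eta> w p \<in> cell \<eta> w"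
    using \<open>p \<in> unit_square\<close> by (simp add: cell_def)
  have "phi n e \<eta> w p \<in> (\<Union>v\<in>words (alphabet n) m. cell \<eta> v)" for m
  proof (cases "m \<le> length w")
    case True
    then have "take m w \<in> words (alphabet n) m"
      using assms by (auto simp: words_def dest: in_set_takeD)
    moreover have "phi n e \<eta> w p \<in> cell \<eta> (take m w)"
      using cell_subset_take[OF assms] in_cell by blast
    ultimately show ?thesis by blast
  next
    case False
    then have "w @ replicate (m - length w) 1 \<in> words (alphabet n) m"
      using assms 1 by (auto simp: words_def)
    moreover have "phi n e \<eta> w p \<in> cell \<eta> (w @ replicate (m - length w) 1)"
      using phi_append_fixed_point[OF fixed] \<open>p \<in> unit_square\<close> unfolding cell_def
      by (metis image_eqI)
    ultimately show ?thesis by blast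
  qed
  then show ?thesis
    using in_cell by (auto simp: K_eq_cells)
qed

section \<open>Ahlfors regularity\<close>

lemma card_alphabet: "card (alphabet n) = 5 * n - 6"
  by (simp add: alphabet_def)

lemma alpha_pos: "0 < alpha n"
  using n_ge_4 by (simp add: alpha_def)

lemma power_powr_alpha: "(real n ^ k) powr alpha n = real (5 * n - 6) ^ k"
proof -
  have "real n powr alpha n = real (5 * n - 6)"
    using n_ge_4 by (simp add: alpha_def powr_def)
  then show ?thesis by (simp add: power_powr)
qed

lemma K_point_in_cell:
  assumes "y \<in> K n e \<eta>" "m \<le> L"
  obtains u where "u \<in> words (alphabet n) L" "take m u \<in> words (alphabet n) m"
    "y \<in> cell \<eta> u" "y \<in> cell \<eta> (take m u)"
proof -
  obtain u where u: "u \<in> words (alphabet n) L" "y \<in> cell \<eta> u"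
    using assms(1) by (auto simp: K_eq_cells)
  moreover have "y \<in> cell \<eta> (take m u)"
    using u cell_subset_take[of u \<eta> m] by (auto simp: words_def)
  ultimately show thesis
    using that take_in_words[OF u(1) assms(2)] by blast
qed

lemma exists_fine_level:
  assumes "0 < \<delta>"
  obtains L where "m \<le> L" "2 / real n ^ L \<le> \<delta>"
proof -
  obtain L0 where "2 / \<delta> < real n ^ L0"
    using real_arch_pow[of "real n" "2 / \<delta>"] n_ge_4 by auto
  moreover have "real n ^ L0 \<le> real n ^ max m L0"
    using n_ge_4 by (intro power_increasing) auto
  ultimately have "2 / \<delta> < real n ^ max m L0"
    by linarith
  then have "2 / real n ^ max m L0 \<le> \<delta>"
    using assms n_ge_4 by (simp add: field_simps)
  then show thesis by (intro that) auto
qed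

lemma hausdorff_measure_K_inter_le:
  "hausdorff_measure (alpha n) (K n e \<eta> \<inter> S)
     \<le> ennreal (card {v \<in> words (alphabet n) m. cell \<eta> v \<inter> S \<noteq> {}}
                 * 2 powr alpha n / real (5 * n - 6) ^ m)"
  unfolding hausdorff_measure_def
proof (rule SUP_least)
  fix \<delta> :: real assume "\<delta> \<in> {0<..}"
  define N where "N = real (5 * n - 6)"
  have N: "1 < N" using n_ge_4 by (simp add: N_def)
  obtain L where "m \<le> L" and L_small: "2 / real n ^ L \<le> \<delta>"
    using exists_fine_level \<open>\<delta> \<in> {0<..}\<close> by blast
  define V where "V = {v \<in> words (alphabet n) m. cell \<eta> v \<inter> S \<noteq> {}}"
  define U where "U = {u \<in> words (alphabet n) L. take m u \<in> V}"
  have "card U \<le> card V * (5 * n - 6) ^ (L - m)"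
    using card_extensions_le[of "alphabet n" V m L] card_alphabet
    by (auto simp: U_def V_def alphabet_def)
  then have card_U: "real (card U) \<le> card V * N ^ (L - m)"
    unfolding N_def by (metis of_nat_le_iff of_nat_mult of_nat_power)
  have diam: "diameter (cell \<eta> u) \<le> 2 / real n ^ L" if "u \<in> U" for u
    using that diameter_grid_square[of "1 / real n ^ L"] by (auto simp: U_def words_def cell_eq_grid_square)
  have "hausdorff_pre (alpha n) \<delta> (K n e \<eta> \<inter> S)
          \<le> ennreal (\<Sum>u\<in>U. diameter (cell \<eta> u) powr alpha n)"
  proof (rule hausdorff_pre_le_finite_cover)
    show "finite U" by (simp add: U_def finite_words alphabet_def)
    show "K n e \<eta> \<inter> S \<subseteq> (\<Union>u\<in>U. cell \<eta> u)"
    proof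
      fix y assume "y \<in> K n e \<eta> \<inter> S"
      then show "y \<in> (\<Union>u\<in>U. cell \<eta> u)"
        by (elim IntE K_point_in_cell[OF _ \<open>m \<le> L\<close>]) (auto simp: U_def V_def)
    qed
    show "bounded (cell \<eta> u) \<and> diameter (cell \<eta> u) \<le> \<delta>" if "u \<in> U" for u
      using diam[OF that] L_small compact_cell by (auto intro: compact_imp_bounded)
  qed (use \<open>\<delta> \<in> {0<..}\<close> in simp)
  also have "(\<Sum>u\<in>U. diameter (cell \<eta> u) powr alpha n) \<le> real (card U) * (2 / real n ^ L) powr alpha n"
    using diam compact_cell alpha_pos
    by (intro sum_bounded_above[simplified] powr_mono2 diameter_ge_0 compact_imp_bounded) auto
  also have "\<dots> \<le> card V * N ^ (L - m) * (2 powr alpha n / N ^ L)"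
    unfolding powr_divide power_powr_alpha N_def[symmetric]
    using card_U by (rule mult_right_mono) (use N in simp)
  also have "\<dots> = card V * 2 powr alpha n / N ^ m"
    using N \<open>m \<le> L\<close> by (simp add: power_diff field_simps)
  finally show "hausdorff_pre (alpha n) \<delta> (K n e \<eta> \<inter> S)
      \<le> ennreal (card {v \<in> words (alphabet n) m. cell \<eta> v \<inter> S \<noteq> {}} * 2 powr alpha n / real (5 * n - 6) ^ m)"
    by (simp add: N_def V_def ennreal_leI)
qed

lemma hausdorff_measure_cball_le:
  assumes "0 < r" "r \<le> 1"
  shows "hausdorff_measure (alpha n) (K n e \<eta> \<inter> cball x r)
           \<le> ennreal (16 * 2 powr alpha n * real (5 * n - 6) * r powr alpha n)"
proof -
  define N where "N = real (5 * n - 6)"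
  have N: "1 < N" using n_ge_4 by (simp add: N_def)
  obtain m where m: "1 / real n ^ Suc m < r" "r \<le> 1 / real n ^ m"
    using exists_power_interval[of "real n" r] assms n_ge_4 by auto
  define V where "V = {v \<in> words (alphabet n) m. cell \<eta> v \<inter> cball x r \<noteq> {}}"
  have "V \<subseteq> {v \<in> words (alphabet n) m. cell \<eta> v \<inter> cball x (1 / real n ^ m) \<noteq> {}}"
    using m(2) by (auto simp: V_def)
  then have "card V \<le> card {v \<in> words (alphabet n) m. cell \<eta> v \<inter> cball x (1 / real n ^ m) \<noteq> {}}"
    by (rule card_mono[rotated]) (simp add: finite_words alphabet_def)
  then have "real (card V) \<le> 16"
    using card_cells_meeting_cball[of m \<eta> x] by linarith
  then have "card V * 2 powr alpha n / N ^ m \<le> 16 * 2 powr alpha n * N * (1 / N ^ Suc m)"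
    using N by (simp add: divide_right_mono)
  also have "1 / N ^ Suc m = (1 / real n ^ Suc m) powr alpha n"
    unfolding powr_divide power_powr_alpha by (simp add: N_def)
  also have "\<dots> \<le> r powr alpha n"
    using m(1) alpha_pos by (intro powr_mono2) auto
  finally have "card V * 2 powr alpha n / N ^ m \<le> 16 * 2 powr alpha n * N * r powr alpha n"
    using N by simp
  with hausdorff_measure_K_inter_le[of \<eta> "cball x r" m] show ?thesis
    unfolding V_def N_def by (meson ennreal_leI order_trans)
qed

lemma cell_weight_le_cball_cover:
  assumes w: "w \<in> words (alphabet n) M" and F: "finite F"
    and cover: "K n e \<eta> \<inter> cell \<eta> w \<subseteq> (\<Union>i\<in>F. cball (z i) (1 / real n ^ k i))"
  shows "1 / real (5 * n - 6) ^ M \<le> 16 * (\<Sum>i\<in>F. 1 / real (5 * n - 6) ^ k i)"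
proof -
  define S where "S i = {v \<in> words (alphabet n) (k i). cell \<eta> v \<inter> cball (z i) (1 / real n ^ k i) \<noteq> {}}" for i
  define L where "L = Max (insert M (k ` F))"
  have "1 / real (5 * n - 6) ^ M \<le> (\<Sum>i\<in>F. real (card (S i)) / real (5 * n - 6) ^ k i)"
    unfolding card_alphabet[symmetric]
  proof (rule prefix_cover_weight[OF _ _ w F, where L = L])
    show "S i \<subseteq> words (alphabet n) (k i) \<and> k i \<le> L" if "i \<in> F" for i
      using that F by (auto simp: S_def L_def)
    show "M \<le> L" using F by (simp add: L_def)
    fix u assume u: "u \<in> words (alphabet n) L" "take M u = w"
    then have u_lists: "u \<in> lists (alphabet n)" by (simp add: words_def)
    then obtain y where y: "y \<in> K n e \<eta>" "y \<in> cell \<eta> u"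
      using K_meets_cell[OF u_lists, of \<eta>] by blast
    then have "y \<in> cell \<eta> w" using cell_subset_take[OF u_lists, of \<eta> M] u(2) by auto
    with y(1) cover obtain i where i: "i \<in> F" "y \<in> cball (z i) (1 / real n ^ k i)" by blast
    have "y \<in> cell \<eta> (take (k i) u)" using cell_subset_take[OF u_lists] y(2) by blast
    moreover have "take (k i) u \<in> words (alphabet n) (k i)"
      using u(1) i(1) F by (intro take_in_words) (auto simp: L_def)
    ultimately have "take (k i) u \<in> S i"
      using i(2) unfolding S_def by blast
    then show "\<exists>i\<in>F. take (k i) u \<in> S i"
      using i(1) by blast
  qed (use n_ge_4 in \<open>auto simp: alphabet_def\<close>)
  also have "\<dots> \<le> (\<Sum>i\<in>F. 16 * (1 / real (5 * n - 6) ^ k i))"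
    using card_cells_meeting_cball by (intro sum_mono) (simp add: S_def divide_right_mono)
  finally show ?thesis by (simp add: sum_distrib_left)
qed

lemma cell_weight_le_ball_cover:
  assumes w: "w \<in> words (alphabet n) M" and F: "finite F"
    and cover: "K n e \<eta> \<inter> cell \<eta> w \<subseteq> (\<Union>i\<in>F. ball (z i) (t i))"
    and t: "\<And>i. i \<in> F \<Longrightarrow> 0 < t i \<and> t i \<le> 1"
  shows "1 / real (5 * n - 6) ^ M \<le> 16 * real (5 * n - 6) * (\<Sum>i\<in>F. t i powr alpha n)"
proof -
  define N where "N = real (5 * n - 6)"
  have N: "1 < N" using n_ge_4 by (simp add: N_def)
  have levels: "\<forall>i\<in>F. \<exists>k. 1 / real n ^ Suc k < t i \<and> t i \<le> 1 / real n ^ k"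
  proof
    fix i assume "i \<in> F"
    show "\<exists>k. 1 / real n ^ Suc k < t i \<and> t i \<le> 1 / real n ^ k"
      by (rule exists_power_interval[of "real n" "t i"]) (use n_ge_4 t[OF \<open>i \<in> F\<close>] in auto)
  qed
  obtain k where k: "\<forall>i\<in>F. 1 / real n ^ Suc (k i) < t i \<and> t i \<le> 1 / real n ^ k i"
    using bchoice[OF levels] by (rule exE)
  have "ball (z i) (t i) \<subseteq> cball (z i) (1 / real n ^ k i)" if "i \<in> F" for i
    using k that by (auto simp: subset_eq)
  then have "(\<Union>i\<in>F. ball (z i) (t i)) \<subseteq> (\<Union>i\<in>F. cball (z i) (1 / real n ^ k i))"
    by (rule UN_mono[OF subset_refl])
  with cover have "K n e \<eta> \<inter> cell \<eta> w \<subseteq> (\<Union>i\<in>F. cball (z i) (1 / real n ^ k i))"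
    by (rule order_trans)
  then have "1 / N ^ M \<le> 16 * (\<Sum>i\<in>F. N * (1 / N ^ Suc (k i)))"
    using cell_weight_le_cball_cover[OF w F] N by (simp add: N_def)
  also have "\<dots> \<le> 16 * (\<Sum>i\<in>F. N * t i powr alpha n)"
  proof (rule mult_left_mono[OF sum_mono])
    fix i assume "i \<in> F"
    have "1 / N ^ Suc (k i) = (1 / real n ^ Suc (k i)) powr alpha n"
      unfolding powr_divide power_powr_alpha by (simp add: N_def)
    also have "\<dots> \<le> t i powr alpha n"
      using k \<open>i \<in> F\<close> alpha_pos by (intro powr_mono2) auto
    finally show "N * (1 / N ^ Suc (k i)) \<le> N * t i powr alpha n"
      by (rule mult_left_mono) (use N in simp)
  qed simp
  finally show ?thesis by (simp add: N_def sum_distrib_left mult.assoc)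
qed

lemma hausdorff_measure_cell_ge:
  assumes "w \<in> words (alphabet n) M"
  shows "ennreal (1 / (16 * 2 powr alpha n * real (5 * n - 6) ^ Suc M))
           \<le> hausdorff_measure (alpha n) (K n e \<eta> \<inter> cell \<eta> w)"
proof -
  define c where "c = 1 / real (5 * n - 6) ^ M / (16 * real (5 * n - 6))"
  have "compact (K n e \<eta> \<inter> cell \<eta> w)"
    using closed_K compact_cell by (rule closed_Int_compact)
  then have "ennreal (c / 2 powr alpha n) \<le> hausdorff_pre (alpha n) (1/2) (K n e \<eta> \<inter> cell \<eta> w)"
  proof (rule hausdorff_pre_ge_ball_covers)
    fix F :: "nat set" and z t
    assume "finite F" "K n e \<eta> \<inter> cell \<eta> w \<subseteq> (\<Union>i\<in>F. ball (z i) (t i))"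
      "\<And>i. i \<in> F \<Longrightarrow> 0 < t i \<and> t i \<le> 2 * (1/2)"
    then have "1 / real (5 * n - 6) ^ M \<le> 16 * real (5 * n - 6) * (\<Sum>i\<in>F. t i powr alpha n)"
      by (intro cell_weight_le_ball_cover[OF assms]) auto
    moreover have "0 < 16 * real (5 * n - 6)" using n_ge_4 by simp
    ultimately show "c \<le> (\<Sum>i\<in>F. t i powr alpha n)"
      unfolding c_def by (simp add: pos_divide_le_eq mult_ac)
  qed (use alpha_pos in simp_all)
  also have "\<dots> \<le> hausdorff_measure (alpha n) (K n e \<eta> \<inter> cell \<eta> w)"
    by (rule hausdorff_pre_le_measure) simp
  finally show ?thesis by (simp add: c_def field_simps)
qed

lemma hausdorff_measure_cball_ge:
  assumes x: "x \<in> K n e \<eta>" and r: "0 < r" "r \<le> 1"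
  shows "ennreal (r powr alpha n / (16 * 4 powr alpha n * real (5 * n - 6) ^ 2))
           \<le> hausdorff_measure (alpha n) (K n e \<eta> \<inter> cball x r)"
proof -
  define N where "N = real (5 * n - 6)"
  have N: "1 < N" using n_ge_4 by (simp add: N_def)
  obtain m where m: "1 / real n ^ Suc m < r / 2" "r / 2 \<le> 1 / real n ^ m"
    using exists_power_interval[of "real n" "r / 2"] r n_ge_4 by auto
  obtain w where w: "w \<in> words (alphabet n) (Suc m)" "x \<in> cell \<eta> w"
    using x by (auto simp: K_eq_cells)
  have "cell \<eta> w \<subseteq> cball x r"
    using w m(1) by (intro cell_subset_cball) (auto simp: words_def)
  have "r powr alpha n = 2 powr alpha n * (r / 2) powr alpha n"
    using r by (simp add: powr_mult[symmetric])
  also have "(r / 2) powr alpha n \<le> (1 / real n ^ m) powr alpha n"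
    using m(2) r alpha_pos by (intro powr_mono2) auto
  also have "\<dots> = 1 / N ^ m"
    unfolding powr_divide power_powr_alpha by (simp add: N_def)
  finally have "r powr alpha n \<le> 2 powr alpha n * (1 / N ^ m)"
    by simp
  moreover have "0 < 16 * 4 powr alpha n * N ^ 2" using N by simp
  ultimately have "r powr alpha n / (16 * 4 powr alpha n * N ^ 2)
                  \<le> 2 powr alpha n * (1 / N ^ m) / (16 * 4 powr alpha n * N ^ 2)"
    by (intro divide_right_mono) auto
  also have "\<dots> = 1 / (16 * 2 powr alpha n * N ^ Suc (Suc m))"
    using N by (simp add: powr_mult[symmetric] field_simps power2_eq_square)
  finally have "ennreal (r powr alpha n / (16 * 4 powr alpha n * N ^ 2))
                  \<le> hausdorff_measure (alpha n) (K n e \<eta> \<inter> cell \<eta> w)"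
    using hausdorff_measure_cell_ge[OF w(1)] unfolding N_def by (meson ennreal_leI order_trans)
  also have "\<dots> \<le> hausdorff_measure (alpha n) (K n e \<eta> \<inter> cball x r)"
    using \<open>cell \<eta> w \<subseteq> cball x r\<close> by (intro hausdorff_measure_mono) blast
  finally show ?thesis by (simp add: N_def)
qed

end

theorem proposition5p1:
  fixes n :: nat and e :: "nat \<Rightarrow> nat \<times> nat"
  assumes "n \<ge> 4" and "even n"
    and "bij_betw e {1..4*n-4} (boundary_cells n)"
  shows "\<exists>C > 1. \<forall>\<eta>. choice_fun n \<eta> \<longrightarrow>
           (\<forall>x \<in> K n e \<eta>. \<forall>r. 0 < r \<and> r < 1 / real n \<longrightarrow>
              ennreal (r powr alpha n / C) \<le> hausdorff_measure (alpha n) (K n e \<eta> \<inter> cball x r) \<and>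
              hausdorff_measure (alpha n) (K n e \<eta> \<inter> cball x r) \<le> ennreal (C * r powr alpha n))"
proof -
  interpret carpet n e using assms by unfold_locales
  define N where "N = real (5 * n - 6)"
  define C where "C = 16 * 4 powr alpha n * N ^ 2"
  have "1 < N" using assms(1) by (simp add: N_def)
  have "2 powr alpha n \<le> 4 powr alpha n" "1 \<le> 4 powr alpha n"
    using alpha_pos by (auto intro: powr_mono2 ge_one_powr_ge_zero)
  moreover have "N \<le> N ^ 2" "1 \<le> N ^ 2"
    using \<open>1 < N\<close> by (simp add: power2_eq_square, intro one_le_power, simp)
  ultimately have "2 powr alpha n * N \<le> 4 powr alpha n * N ^ 2" "1 * 1 \<le> 4 powr alpha n * N ^ 2"
    using \<open>1 < N\<close> by (intro mult_mono; simp)+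
  then have upper_const: "16 * 2 powr alpha n * N \<le> C" and "1 < C"
    by (simp_all add: C_def)
  have "ennreal (r powr alpha n / C) \<le> hausdorff_measure (alpha n) (K n e \<eta> \<inter> cball x r) \<and>
        hausdorff_measure (alpha n) (K n e \<eta> \<inter> cball x r) \<le> ennreal (C * r powr alpha n)"
    if "x \<in> K n e \<eta>" "0 < r" "r < 1 / real n" for \<eta> x r
  proof
    have "1 / real n \<le> 1" using assms(1) by simp
    with that(3) have "r \<le> 1" by linarith
    show "ennreal (r powr alpha n / C) \<le> hausdorff_measure (alpha n) (K n e \<eta> \<inter> cball x r)"
      using hausdorff_measure_cball_ge[OF that(1,2) \<open>r \<le> 1\<close>] by (simp add: C_def N_def)
    have "16 * 2 powr alpha n * N * r powr alpha n \<le> C * r powr alpha n"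
      using upper_const by (rule mult_right_mono) simp
    then show "hausdorff_measure (alpha n) (K n e \<eta> \<inter> cball x r) \<le> ennreal (C * r powr alpha n)"
      using hausdorff_measure_cball_le[OF that(2) \<open>r \<le> 1\<close>, of \<eta> x] unfolding N_def
      by (meson ennreal_leI order_trans)
  qed
  with \<open>1 < C\<close> show ?thesis by blast
qed

end
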